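(* Let $W\in\mathbb{R}^{d\times d}$ be symmetric positive semidefinite with $\mathrm{tr}(W)=1$, $\sum_{i,j}|W_{ij}|\le k$, and $\mathrm{rank}(W)=r$. Then $\sum_{i=1}^d\sqrt{W_{ii}}\le\sqrt{rk}$. *)

theory Defs
  imports "HOL-Analysis.Analysis"
begin

definition psd :: "real^'n^'n \<Rightarrow> bool" where
  "psd W \<longleftrightarrow> (\<forall>x::real^'n. 0 \<le> x \<bullet> (W *v x))"

end

theory Submission
  imports Defs
begin

text \<open>Rescale \<open>W\<close> to \<open>B = D W D\<close> with \<open>D = diag (W\<^sub>i\<^sub>i\<^sup>-\<^sup>1\<^sup>/\<^sup>4)\<close>. Then \<open>tr B = \<Sum>\<^sub>i sqrt W\<^sub>i\<^sub>i\<close>,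
  \<open>rank B \<le> rank W\<close>, and \<open>B\<^sub>i\<^sub>j\<^sup>2 = W\<^sub>i\<^sub>j\<^sup>2 / sqrt (W\<^sub>i\<^sub>i W\<^sub>j\<^sub>j) \<le> \<bar>W\<^sub>i\<^sub>j\<bar>\<close> because the \<open>2\<times>2\<close> principal
  minors of a positive semidefinite matrix are nonnegative, so \<open>\<parallel>B\<parallel>\<^sub>F\<^sup>2 \<le> k\<close>. It remains to use
  \<open>(tr B)\<^sup>2 \<le> rank B \<cdot> \<parallel>B\<parallel>\<^sub>F\<^sup>2\<close>, valid for every square matrix: expanding each row \<open>B\<^sub>i\<close> in an
  orthonormal basis \<open>b\<^sub>1, \<dots>, b\<^sub>r\<close> of the row space gives \<open>tr B = \<Sum>\<^sub>i\<^sub>,\<^sub>l (b\<^sub>l)\<^sub>i (b\<^sub>l \<bullet> B\<^sub>i)\<close>,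
  and Cauchy-Schwarz over the index pairs \<open>(i, l)\<close> bounds its square by \<open>r \<cdot> \<Sum>\<^sub>i \<parallel>B\<^sub>i\<parallel>\<^sup>2\<close>.\<close>

lemma quadratic_nonneg_imp_discriminant_le:
  fixes a b c :: real
  assumes "0 \<le> a" and "\<And>t. 0 \<le> a * t\<^sup>2 + 2 * b * t + c"
  shows "b\<^sup>2 \<le> a * c"
proof (cases "a = 0")
  case True
  show ?thesis
  proof (rule ccontr)
    assume "\<not> ?thesis"
    then have "b \<noteq> 0" using True by simp
    have "0 \<le> 2 * b * (- (c + 1) / (2 * b)) + c"
      using assms(2)[of "- (c + 1) / (2 * b)"] True by simp
    also have "\<dots> = -1" using \<open>b \<noteq> 0\<close> by (simp add: field_simps)
    finally show False by simp
  qed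
next
  case False
  then have "0 < a" using assms(1) by simp
  have "0 \<le> a * (- b / a)\<^sup>2 + 2 * b * (- b / a) + c" by (rule assms(2))
  also have "\<dots> = c - b\<^sup>2 / a" using \<open>0 < a\<close> by (simp add: field_simps power2_eq_square)
  finally show ?thesis using \<open>0 < a\<close> by (simp add: field_simps)
qed

lemma inner_axis_matrix_vector_axis:
  fixes A :: "real^'n^'n"
  shows "axis i 1 \<bullet> (A *v axis j 1) = A $ i $ j"
  by (simp add: matrix_vector_mult_basis column_def inner_axis')

lemma psd_diag_nonneg:
  assumes "psd A"
  shows "0 \<le> A $ i $ i"
  using assms inner_axis_matrix_vector_axis[of i A i] unfolding psd_def by metis

lemma psd_entry_square_le:
  assumes "transpose A = A" and "psd A"
  shows "(A $ i $ j)\<^sup>2 \<le> A $ i $ i * A $ j $ j"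
proof (rule quadratic_nonneg_imp_discriminant_le[OF psd_diag_nonneg[OF assms(2)]])
  fix t
  let ?x = "t *\<^sub>R axis i 1 + axis j 1"
  have "A $ j $ i = A $ i $ j" using assms(1) by (metis transpose_def vec_lambda_beta)
  then have "?x \<bullet> (A *v ?x) = A $ i $ i * t\<^sup>2 + 2 * A $ i $ j * t + A $ j $ j"
    by (simp add: inner_axis_matrix_vector_axis algebra_simps power2_eq_square)
  then show "0 \<le> A $ i $ i * t\<^sup>2 + 2 * A $ i $ j * t + A $ j $ j"
    using assms(2) unfolding psd_def by metis
qed

lemma psd_abs_entry_le:
  assumes "transpose A = A" and "psd A"
  shows "\<bar>A $ i $ j\<bar> \<le> sqrt (A $ i $ i) * sqrt (A $ j $ j)"
  using real_sqrt_le_mono[OF psd_entry_square_le[OF assms, of i j]]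
  by (simp add: real_sqrt_mult)

lemma orthonormal_span_expansion:
  fixes B :: "'a::euclidean_space set"
  assumes "pairwise orthogonal B" and "\<And>b. b \<in> B \<Longrightarrow> norm b = 1" and "x \<in> span B"
  shows "x = (\<Sum>b\<in>B. (b \<bullet> x) *\<^sub>R b)"
proof -
  have proj: "(\<Sum>b\<in>B. (b \<bullet> x / (b \<bullet> b)) *\<^sub>R b) = (\<Sum>b\<in>B. (b \<bullet> x) *\<^sub>R b)"
    using assms(2) by (intro sum.cong) (auto simp: norm_eq_1)
  let ?y = "x - (\<Sum>b\<in>B. (b \<bullet> x) *\<^sub>R b)"
  have "?y \<in> span B"
    by (simp add: assms(3) span_diff span_sum span_scale span_base)
  then have "orthogonal ?y ?y"
    using Gram_Schmidt_step[OF assms(1), of ?y x] by (simp only: proj)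
  then show ?thesis by (simp add: orthogonal_def)
qed

lemma orthonormal_span_inner_self:
  fixes B :: "'a::euclidean_space set"
  assumes "pairwise orthogonal B" and "\<And>b. b \<in> B \<Longrightarrow> norm b = 1" and "x \<in> span B"
  shows "x \<bullet> x = (\<Sum>b\<in>B. (b \<bullet> x)\<^sup>2)"
proof -
  have "x \<bullet> x = x \<bullet> (\<Sum>b\<in>B. (b \<bullet> x) *\<^sub>R b)"
    using orthonormal_span_expansion[OF assms] by simp
  also have "\<dots> = (\<Sum>b\<in>B. (b \<bullet> x)\<^sup>2)"
    by (simp add: inner_sum_right power2_eq_square inner_commute)
  finally show ?thesis .
qed

lemma power2_norm_matrix:
  fixes A :: "real^'n^'m"
  shows "(norm A)\<^sup>2 = (\<Sum>i\<in>UNIV. \<Sum>j\<in>UNIV. (A $ i $ j)\<^sup>2)"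
  unfolding power2_norm_eq_inner by (simp add: inner_vec_def power2_eq_square)

lemma trace_square_le_rank_mult_norm_square:
  fixes A :: "real^'n^'n"
  shows "(trace A)\<^sup>2 \<le> real (rank A) * (norm A)\<^sup>2"
proof -
  obtain B where B: "pairwise orthogonal B" "\<And>b. b \<in> B \<Longrightarrow> norm b = 1"
    "independent B" "card B = dim (span (rows A))" "span B = span (rows A)"
    using orthonormal_basis_subspace[OF subspace_span] by metis
  have row_in_span: "A $ i \<in> span B" for i
    unfolding B(5) rows_def row_def by (intro span_base) auto
  have diag: "A $ i $ i = (\<Sum>b\<in>B. b $ i * (b \<bullet> A $ i))" for i
  proof -
    have "A $ i $ i = (\<Sum>b\<in>B. (b \<bullet> A $ i) *\<^sub>R b) $ i"
      using orthonormal_span_expansion[OF B(1,2) row_in_span] by metis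
    then show ?thesis by (simp add: mult.commute)
  qed
  have "trace A = (\<Sum>i\<in>UNIV. \<Sum>b\<in>B. b $ i * (b \<bullet> A $ i))"
    by (simp add: trace_def diag)
  also have "\<dots> = (\<Sum>(i, b)\<in>UNIV \<times> B. b $ i * (b \<bullet> A $ i))"
    by (rule sum.cartesian_product)
  finally have "(trace A)\<^sup>2 \<le>
      (\<Sum>(i, b)\<in>UNIV \<times> B. (b $ i)\<^sup>2) * (\<Sum>(i, b)\<in>UNIV \<times> B. (b \<bullet> A $ i)\<^sup>2)"
    using Cauchy_Schwarz_ineq_sum[of "\<lambda>p. snd p $ fst p" "\<lambda>p. snd p \<bullet> A $ fst p" "UNIV \<times> B"]
    by (simp add: case_prod_beta)
  also have "(\<Sum>(i, b)\<in>UNIV \<times> B. (b $ i)\<^sup>2) = real (rank A)"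
  proof -
    have "(\<Sum>(i, b)\<in>UNIV \<times> B. (b $ i)\<^sup>2) = (\<Sum>b\<in>B. b \<bullet> b)"
      by (simp add: sum.cartesian_product[symmetric] sum.swap[of _ UNIV] inner_vec_def
          power2_eq_square)
    also have "\<dots> = real (card B)" using B(2) by (simp add: norm_eq_1)
    finally show ?thesis by (simp add: B(4) row_rank_def)
  qed
  also have "(\<Sum>(i, b)\<in>UNIV \<times> B. (b \<bullet> A $ i)\<^sup>2) = (\<Sum>i\<in>UNIV. A $ i \<bullet> A $ i)"
    by (simp add: sum.cartesian_product[symmetric]
        orthonormal_span_inner_self[OF B(1,2) row_in_span])
  also have "\<dots> = (norm A)\<^sup>2"
    by (simp add: power2_norm_eq_inner inner_vec_def)
  finally show ?thesis .
qed

definition diag_mat :: "('n \<Rightarrow> 'a::zero) \<Rightarrow> 'a^'n^'n" where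
  "diag_mat d = (\<chi> i j. if i = j then d i else 0)"

lemma diag_mat_sandwich_nth:
  fixes A :: "'a::comm_semiring_1^'n^'n"
  shows "(diag_mat d ** A ** diag_mat d) $ i $ j = d i * A $ i $ j * d j"
  by (simp add: diag_mat_def matrix_matrix_mult_def if_distrib if_distribR cong: if_cong)

lemma rank_diag_mat_sandwich_le:
  fixes A :: "real^'n^'n"
  shows "rank (diag_mat d ** A ** diag_mat d) \<le> rank A"
  using rank_mul_le_left[of "diag_mat d ** A" "diag_mat d"] rank_mul_le_right[of "diag_mat d" A]
  by linarith

text \<open>Since \<open>inverse 0 = 0\<close>, a zero diagonal entry gives a zero scaling factor; this is
  harmless for positive semidefinite \<open>A\<close>, whose corresponding row and column vanish.\<close>

definition diag_quartic_rescale :: "real^'n^'n \<Rightarrow> real^'n^'n" where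
  "diag_quartic_rescale A =
    (let D = diag_mat (\<lambda>i. inverse (sqrt (sqrt (A $ i $ i)))) in D ** A ** D)"

lemma diag_quartic_rescale_nth:
  "diag_quartic_rescale A $ i $ j =
    A $ i $ j / (sqrt (sqrt (A $ i $ i)) * sqrt (sqrt (A $ j $ j)))"
  by (simp add: diag_quartic_rescale_def Let_def diag_mat_sandwich_nth divide_inverse mult_ac)

lemma diag_quartic_rescale_diag:
  assumes "0 \<le> A $ i $ i"
  shows "diag_quartic_rescale A $ i $ i = sqrt (A $ i $ i)"
  using assms by (simp add: diag_quartic_rescale_nth real_div_sqrt)

lemma rank_diag_quartic_rescale_le: "rank (diag_quartic_rescale A) \<le> rank A"
  unfolding diag_quartic_rescale_def Let_def by (rule rank_diag_mat_sandwich_le)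

lemma trace_diag_quartic_rescale:
  assumes "psd A"
  shows "trace (diag_quartic_rescale A) = (\<Sum>i\<in>UNIV. sqrt (A $ i $ i))"
  by (simp add: trace_def diag_quartic_rescale_diag psd_diag_nonneg[OF assms])

lemma psd_diag_quartic_rescale_square_le:
  assumes "transpose A = A" and "psd A"
  shows "(diag_quartic_rescale A $ i $ j)\<^sup>2 \<le> \<bar>A $ i $ j\<bar>"
proof -
  define q where "q = sqrt (A $ i $ i) * sqrt (A $ j $ j)"
  have "(sqrt (sqrt (A $ i $ i)) * sqrt (sqrt (A $ j $ j)))\<^sup>2 = q"
    using psd_diag_nonneg[OF assms(2)]
    by (simp add: q_def power_mult_distrib)
  then have "(diag_quartic_rescale A $ i $ j)\<^sup>2 = (A $ i $ j)\<^sup>2 / q"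
    by (simp add: diag_quartic_rescale_nth power_divide)
  also have "\<dots> = \<bar>A $ i $ j\<bar> * (\<bar>A $ i $ j\<bar> / q)"
    by (simp add: power2_eq_square)
  also have "\<dots> \<le> \<bar>A $ i $ j\<bar> * 1"
  proof (intro mult_left_mono)
    have "\<bar>A $ i $ j\<bar> \<le> q" unfolding q_def by (rule psd_abs_entry_le[OF assms])
    then show "\<bar>A $ i $ j\<bar> / q \<le> 1"
      by (cases "q = 0") (simp_all add: field_simps)
  qed simp
  finally show ?thesis by simp
qed

lemma psd_norm_diag_quartic_rescale_le:
  assumes "transpose A = A" and "psd A"
  shows "(norm (diag_quartic_rescale A))\<^sup>2 \<le> (\<Sum>i\<in>UNIV. \<Sum>j\<in>UNIV. \<bar>A $ i $ j\<bar>)"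
  unfolding power2_norm_matrix by (intro sum_mono psd_diag_quartic_rescale_square_le[OF assms])

theorem proposition2:
  fixes W :: "real^'n^'n" and k :: real and r :: nat
  assumes "transpose W = W"
    and "psd W"
    and "trace W = 1"
    and "(\<Sum>i\<in>UNIV. \<Sum>j\<in>UNIV. \<bar>W $ i $ j\<bar>) \<le> k"
    and "rank W = r"
  shows "(\<Sum>i\<in>UNIV. sqrt (W $ i $ i)) \<le> sqrt (real r * k)"
proof -
  let ?B = "diag_quartic_rescale W"
  have "(trace ?B)\<^sup>2 \<le> real (rank ?B) * (norm ?B)\<^sup>2"
    by (rule trace_square_le_rank_mult_norm_square)
  also have "\<dots> \<le> real r * (norm ?B)\<^sup>2"
    using rank_diag_quartic_rescale_le[of W] assms(5) by (intro mult_right_mono) auto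
  also have "\<dots> \<le> real r * k"
    using psd_norm_diag_quartic_rescale_le[OF assms(1,2)] assms(4) by (intro mult_left_mono) auto
  finally show ?thesis
    by (simp add: real_le_rsqrt flip: trace_diag_quartic_rescale[OF assms(2)])
qed

end
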